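(* For every real $\alpha>0$ the series $\sum_{k=1}^{+\infty}\left(p^{(k)}_k\right)^{-\alpha}$ converges.
   Context: Let $p_n$ denote the $n$-th prime number. Define $p^{(0)}_n=n$ and recursively $p^{(k+1)}_n=p_{p^{(k)}_n}$ for $k\in\mathbb N_0$. *)

theory Defs
  imports "HOL-Analysis.Analysis" "HOL-Computational_Algebra.Primes"
begin

text \<open>The n-th prime, 1-indexed: nth_prime 1 = 2, nth_prime 2 = 3, ...
  It is the least prime p such that exactly n primes are \<le> p.
  (The value at n = 0 is irrelevant for the statement.)\<close>
definition nth_prime :: "nat \<Rightarrow> nat" where
  "nth_prime n = (LEAST p. prime p \<and> card {q. prime q \<and> q \<le> p} = n)"

text \<open>Iterated prime: iter_prime k n = p^{(k)}_n, with p^{(0)}_n = n and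
  p^{(k+1)}_n = p_{p^{(k)}_n}.\<close>
definition iter_prime :: "nat \<Rightarrow> nat \<Rightarrow> nat" where
  "iter_prime k n = (nth_prime ^^ k) n"

end

theory Submission
  imports Defs
begin

text \<open>All primes but 2 are odd, so at most (m + 1)/2 numbers up to m are prime; hence
  p_n >= 2n - 1, i.e. p_n - 1 >= 2(n - 1). Iterating k + 1 times from n = k + 1 gives
  p^(k+1)_(k+1) - 1 >= 2^(k+1) k, so the series is dominated by the geometric series
  with ratio 2 powr -\<alpha> < 1.\<close>

definition primes_pi :: "nat \<Rightarrow> nat" where
  "primes_pi m = card {q. prime q \<and> q \<le> m}"

lemma primes_pi_0 [simp]: "primes_pi 0 = 0"
  unfolding primes_pi_def by (auto simp: prime_gt_0_nat)

lemma primes_pi_Suc: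
  "primes_pi (Suc m) = (if prime (Suc m) then Suc (primes_pi m) else primes_pi m)"
proof -
  have "{q. prime q \<and> q \<le> Suc m} =
      (if prime (Suc m) then insert (Suc m) {q. prime q \<and> q \<le> m} else {q. prime q \<and> q \<le> m})"
    by (auto simp: le_Suc_eq)
  then show ?thesis
    by (simp add: primes_pi_def)
qed

lemma primes_pi_unbounded: "\<exists>m. n \<le> primes_pi m"
proof -
  obtain B where B: "finite B" "card B = n" "B \<subseteq> {p::nat. prime p}"
    using infinite_arbitrarily_large[OF primes_infinite] by blast
  have "B \<subseteq> {q. prime q \<and> q \<le> Max B}"
    using B by auto
  then have "card B \<le> primes_pi (Max B)"
    unfolding primes_pi_def by (intro card_mono) auto
  then show ?thesis
    using B(2) by blast
qed

lemma primes_pi_attains_at_prime: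
  assumes "n \<ge> 1"
  shows "\<exists>p. prime p \<and> primes_pi p = n"
proof -
  define m where "m = (LEAST m. n \<le> primes_pi m)"
  have m: "n \<le> primes_pi m"
    unfolding m_def using primes_pi_unbounded by (rule LeastI_ex)
  have "m \<noteq> 0"
    using m assms by (intro notI) simp
  then obtain k where k: "m = Suc k"
    using not0_implies_Suc by blast
  have "\<not> n \<le> primes_pi k"
    using not_less_Least[of k "\<lambda>m. n \<le> primes_pi m"] unfolding m_def[symmetric] k by simp
  with m have "prime (Suc k) \<and> primes_pi (Suc k) = n"
    unfolding k primes_pi_Suc[of k] by (auto split: if_splits)
  then show ?thesis ..
qed

lemma nth_prime_spec:
  assumes "n \<ge> 1"
  shows "prime (nth_prime n) \<and> primes_pi (nth_prime n) = n"
  unfolding nth_prime_def primes_pi_def[symmetric]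
  using primes_pi_attains_at_prime[OF assms] by (rule LeastI_ex)

lemma prime_recovered_from_half:
  fixes q :: nat
  assumes "prime q"
  shows "q = (if (q - 1) div 2 = 0 then 2 else 2 * ((q - 1) div 2) + 1)"
proof (cases "q = 2")
  case False
  then have "odd q" "q \<ge> 3"
    using assms prime_odd_nat[of q] prime_ge_2_nat[of q] by auto
  then show ?thesis
    by (auto elim!: oddE)
qed simp

lemma primes_pi_le: "2 * primes_pi m \<le> m + 1"
proof (cases "m = 0")
  case False
  let ?P = "{q. prime q \<and> q \<le> m}"
  have "inj_on (\<lambda>q. (q - 1) div 2) ?P"
    by (rule inj_on_inverseI[where g = "\<lambda>x. if x = 0 then 2 else 2 * x + 1"])
      (use prime_recovered_from_half in auto)
  moreover have "(\<lambda>q. (q - 1) div 2) ` ?P \<subseteq> {..(m - 1) div 2}"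
    by (auto intro: div_le_mono)
  ultimately have "primes_pi m \<le> card {..(m - 1) div 2}"
    unfolding primes_pi_def by (rule card_inj_on_le) simp_all
  then show ?thesis
    using False by simp
qed simp

lemma nth_prime_lower_bound: "2 * (n - 1) \<le> nth_prime n - 1"
proof (cases "n = 0")
  case False
  then have "prime (nth_prime n)" "primes_pi (nth_prime n) = n"
    using nth_prime_spec by auto
  then show ?thesis
    using primes_pi_le[of "nth_prime n"] prime_gt_0_nat[of "nth_prime n"] by linarith
qed simp

lemma funpow_lower_bound:
  fixes f :: "nat \<Rightarrow> nat"
  assumes "\<And>x. c * (x - 1) \<le> f x - 1"
  shows "c ^ j * (x - 1) \<le> (f ^^ j) x - 1"
proof (induction j)
  case (Suc j)
  have "c ^ Suc j * (x - 1) = c * (c ^ j * (x - 1))"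
    by simp
  also have "\<dots> \<le> c * ((f ^^ j) x - 1)"
    using Suc.IH by (rule mult_left_mono) simp
  also have "\<dots> \<le> (f ^^ Suc j) x - 1"
    using assms by simp
  finally show ?case .
qed simp

lemma iter_prime_lower_bound: "2 ^ k * (n - 1) \<le> iter_prime k n - 1"
  unfolding iter_prime_def using nth_prime_lower_bound by (rule funpow_lower_bound)

lemma summable_powr_neg_of_geometric_lower_bound:
  fixes a :: "nat \<Rightarrow> real" and c \<alpha> :: real
  assumes "\<alpha> > 0" "c > 1" and bound: "\<And>k. k \<ge> N \<Longrightarrow> c ^ k \<le> a k"
  shows "summable (\<lambda>k. a k powr - \<alpha>)"
proof (rule summable_comparison_test')
  have "c powr - \<alpha> < c powr 0"
    using assms by (intro powr_less_mono) auto
  then show "summable (\<lambda>k. (c powr - \<alpha>) ^ k)"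
    using \<open>c > 1\<close> by (intro summable_geometric) simp
  fix k assume "k \<ge> N"
  have "a k powr - \<alpha> \<le> (c ^ k) powr - \<alpha>"
    using assms bound[OF \<open>k \<ge> N\<close>] by (intro powr_mono2') auto
  also have "\<dots> = (c powr - \<alpha>) ^ k"
    using \<open>c > 1\<close> by (simp add: powr_realpow[symmetric] powr_powr mult.commute)
  finally show "norm (a k powr - \<alpha>) \<le> (c powr - \<alpha>) ^ k"
    by simp
qed

theorem theorem13:
  fixes \<alpha> :: real
  assumes "\<alpha> > 0"
  shows "summable (\<lambda>k::nat. (real (iter_prime (Suc k) (Suc k))) powr (- \<alpha>))"
proof (rule summable_powr_neg_of_geometric_lower_bound[where c = 2 and N = 1])
  fix k :: nat assume "k \<ge> 1"
  have "2 ^ k \<le> 2 ^ Suc k * k"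
    using \<open>k \<ge> 1\<close> by (simp add: mult_le_mono)
  also have "\<dots> \<le> iter_prime (Suc k) (Suc k) - 1"
    using iter_prime_lower_bound[of "Suc k" "Suc k"] by simp
  finally have "2 ^ k \<le> iter_prime (Suc k) (Suc k)"
    by linarith
  then show "2 ^ k \<le> real (iter_prime (Suc k) (Suc k))"
    by (metis of_nat_le_iff of_nat_numeral of_nat_power)
qed (use assms in auto)

end
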